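(* Let $n\ge 1$ be an integer, $a>0$, and let $a_0,\dots,a_{n-1}:((-a,a)\setminus\{0\})\times\mathbb{K}\to\mathbb{K}$ be arbitrary functions, where $\mathbb{K}=\mathbb{R}$ or $\mathbb{C}$. Let $f\in C^\infty(-a,a)$ be a solution of $$f^{(n)}(x)+a_{n-1}(x,f(x))f^{(n-1)}(x)+\cdots+a_0(x,f(x))f(x)=0,\qquad x\in(-a,a)\setminus\{0\},$$ satisfying $f(0)=f'(0)=\cdots=f^{(n-1)}(0)=0$. Let $B_n=\sum_{k=0}^{n-1}\frac{1}{k!}$ and suppose $$\limsup_{x\to 0}|x|^{n-k}\,|a_k(x,f(x))|< \frac{1}{B_n},\qquad k=0,1,\dots,n-1.$$ Then there exists $\delta>0$ such that $f\equiv 0$ on $[-\delta,\delta]$.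
   Context: The coefficients may be singular at $x=0$; the equation is only required to hold for $x\neq 0$. *)

theory Defs
  imports "HOL-Analysis.Analysis" "HOL-Library.Liminf_Limsup"
begin

fun nth_vderiv :: "nat \<Rightarrow> (real \<Rightarrow> 'a::real_normed_vector) \<Rightarrow> real \<Rightarrow> 'a" where
  "nth_vderiv 0 f = f"
| "nth_vderiv (Suc k) f = (\<lambda>x. vector_derivative (nth_vderiv k f) (at x))"

definition smooth_on :: "real set \<Rightarrow> (real \<Rightarrow> 'a::real_normed_vector) \<Rightarrow> bool" where
  "smooth_on S f \<longleftrightarrow> (\<forall>k. \<forall>x\<in>S. nth_vderiv k f differentiable (at x))"

end

theory Submission
  imports Defs
begin

(* Let f solve f^(n) + sum_{k<n} a_k(x, f(x)) f^(k) = 0 off 0, with f^(k)(0) = 0 for k < n,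
   and suppose eventually |x|^(n-k) |a_k(x, f(x))| <= c with c * B_n < 1.
   On a small interval [-d, d] let M = max |f^(n)|.  Integrating n - k times from 0 gives
   |f^(k)(x)| <= M |x|^(n-k) / (n-k)!, so the equation yields
   |f^(n)(x)| <= c * (sum_{k<n} 1/(n-k)!) * M <= c * B_n * M for x <> 0, and by continuity
   also at 0.  Hence M <= q M with q < 1, so M = 0, and then f = 0 on [-d, d]. *)

text \<open>Reindexing: \<open>\<Sum>k<n. 1/(n-k)! = \<Sum>i=1..n. 1/i!\<close>, which is at most \<open>B\<^sub>n = \<Sum>j<n. 1/j!\<close>.\<close>
lemma sum_inverse_fact_shift_le:
  "(\<Sum>k<n. 1 / fact (n - k) :: real) \<le> (\<Sum>j<n. 1 / fact j)"
proof -
  have "(\<Sum>k<n. 1 / fact (n - k) :: real) = (\<Sum>i<n. 1 / fact (n - Suc i + 1))"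
    by (intro sum.cong refl) (simp add: Suc_diff_Suc)
  also have "\<dots> = (\<Sum>i<n. 1 / fact (i + 1))"
    using sum.nat_diff_reindex[of "\<lambda>i. 1 / (fact (i + 1) :: real)" n] by simp
  also have "\<dots> \<le> (\<Sum>j<n. 1 / fact j)"
    by (rule sum_mono) (auto simp: divide_simps fact_mono)
  finally show ?thesis .
qed

lemma norm_bound_by_integration_right:
  fixes g :: "real \<Rightarrow> 'a::real_normed_vector"
  assumes x: "0 \<le> x"
    and deriv: "\<And>t. 0 \<le> t \<Longrightarrow> t \<le> x \<Longrightarrow> (g has_vector_derivative g' t) (at t)"
    and g0: "g 0 = 0"
    and bnd: "\<And>t. 0 \<le> t \<Longrightarrow> t \<le> x \<Longrightarrow> norm (g' t) \<le> M * t ^ j / fact j"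
  shows "norm (g x) \<le> M * x ^ Suc j / fact (Suc j)"
proof (cases "x = 0")
  case True
  then show ?thesis using g0 by simp
next
  case False
  have "norm (g x - g 0) \<le> M * x ^ Suc j / fact (Suc j) - M * 0 ^ Suc j / fact (Suc j)"
  proof (rule differentiable_bound_general[where f' = g' and \<phi>' = "\<lambda>t. M * t ^ j / fact j"])
    show "0 < x" using x False by simp
    show "continuous_on {0..x} g"
      using deriv by (intro continuous_at_imp_continuous_on ballI
          has_vector_derivative_continuous) auto
    show "continuous_on {0..x} (\<lambda>t. M * t ^ Suc j / fact (Suc j))"
      by (intro continuous_intros) auto
    fix t assume t: "0 < t" "t < x"
    show "(g has_vector_derivative g' t) (at t)" using deriv t by simp
    show "norm (g' t) \<le> M * t ^ j / fact j" using bnd t by simp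
    have "((\<lambda>t. M * t ^ Suc j / fact (Suc j)) has_real_derivative
            M * (real (Suc j) * t ^ j) / fact (Suc j)) (at t)"
      using DERIV_pow[of "Suc j" t] by (intro DERIV_cdivide DERIV_cmult) simp
    moreover have "M * (real (Suc j) * t ^ j) / fact (Suc j) = M * t ^ j / fact j"
      by (simp add: fact_Suc divide_simps)
    ultimately show "((\<lambda>t. M * t ^ Suc j / fact (Suc j)) has_vector_derivative
                       M * t ^ j / fact j) (at t)"
      by (simp add: has_real_derivative_iff_has_vector_derivative)
  qed
  then show ?thesis using g0 by simp
qed

text \<open>The same integration step on both sides of 0; the left side reduces to the right side
  by the reflection \<open>t \<mapsto> -t\<close>.\<close>
lemma norm_bound_by_integration:
  fixes g :: "real \<Rightarrow> 'a::real_normed_vector"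
  assumes deriv: "\<And>t. \<bar>t\<bar> \<le> \<bar>x\<bar> \<Longrightarrow> (g has_vector_derivative g' t) (at t)"
    and g0: "g 0 = 0"
    and bnd: "\<And>t. \<bar>t\<bar> \<le> \<bar>x\<bar> \<Longrightarrow> norm (g' t) \<le> M * \<bar>t\<bar> ^ j / fact j"
  shows "norm (g x) \<le> M * \<bar>x\<bar> ^ Suc j / fact (Suc j)"
proof (cases "0 \<le> x")
  case True
  have "norm (g x) \<le> M * x ^ Suc j / fact (Suc j)"
  proof (rule norm_bound_by_integration_right[OF True, where g' = g'])
    fix t assume t: "0 \<le> t" "t \<le> x"
    show "(g has_vector_derivative g' t) (at t)" using deriv t by simp
    show "norm (g' t) \<le> M * t ^ j / fact j" using bnd[of t] t by simp
  qed (rule g0)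
  then show ?thesis using True by simp
next
  case False
  have "norm (g (- (- x))) \<le> M * (- x) ^ Suc j / fact (Suc j)"
  proof (rule norm_bound_by_integration_right[where g = "\<lambda>t. g (- t)" and g' = "\<lambda>t. - g' (- t)"])
    fix t assume t: "0 \<le> t" "t \<le> - x"
    show "((\<lambda>t. g (- t)) has_vector_derivative - g' (- t)) (at t)"
      using vector_diff_chain_at[OF has_vector_derivative_minus[OF has_vector_derivative_id]
          deriv[of "- t"]] t by (simp add: o_def)
    show "norm (- g' (- t)) \<le> M * t ^ j / fact j" using bnd[of "- t"] t by simp
  qed (use False g0 in simp_all)
  then show ?thesis using False by simp
qed

lemma iterated_derivative_bound:
  fixes D :: "nat \<Rightarrow> real \<Rightarrow> 'a::real_normed_vector"
  assumes deriv: "\<And>k t. k < n \<Longrightarrow> \<bar>t\<bar> \<le> \<delta> \<Longrightarrow> (D k has_vector_derivative D (Suc k) t) (at t)"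
    and init: "\<And>k. k < n \<Longrightarrow> D k 0 = 0"
    and top: "\<And>t. \<bar>t\<bar> \<le> \<delta> \<Longrightarrow> norm (D n t) \<le> M"
    and j: "j \<le> n" and x: "\<bar>x\<bar> \<le> \<delta>"
  shows "norm (D (n - j) x) \<le> M * \<bar>x\<bar> ^ j / fact j"
  using j x
proof (induction j arbitrary: x)
  case 0
  then show ?case using top by simp
next
  case (Suc j)
  have order: "Suc (n - Suc j) = n - j" using Suc.prems(1) by simp
  show ?case
  proof (rule norm_bound_by_integration[where g' = "D (n - j)"])
    fix t assume "\<bar>t\<bar> \<le> \<bar>x\<bar>"
    then have t: "\<bar>t\<bar> \<le> \<delta>" using Suc.prems(2) by simp
    show "(D (n - Suc j) has_vector_derivative D (n - j) t) (at t)"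
      using deriv[OF _ t, of "n - Suc j"] Suc.prems(1) order by simp
    show "norm (D (n - j) t) \<le> M * \<bar>t\<bar> ^ j / fact j"
      using Suc.IH[OF _ t] Suc.prems(1) by simp
  qed (use init Suc.prems(1) in simp)
qed

lemma Limsup_uniform_bound:
  fixes g :: "'k \<Rightarrow> 'b \<Rightarrow> real"
  assumes K: "finite K" and L: "L > 0"
    and ls: "\<And>k. k \<in> K \<Longrightarrow> Limsup F (\<lambda>x. ereal (g k x)) < ereal L"
  shows "\<exists>c. 0 \<le> c \<and> c < L \<and> eventually (\<lambda>x. \<forall>k\<in>K. g k x \<le> c) F"
proof -
  define S where "S = Max (insert 0 ((\<lambda>k. Limsup F (\<lambda>x. ereal (g k x))) ` K))"
  have "S < ereal L" unfolding S_def using K L ls by simp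
  then obtain c where Sc: "S < ereal c" and cL: "ereal c < ereal L"
    using ereal_dense2 by blast
  have S_ge: "0 \<le> S" "\<And>k. k \<in> K \<Longrightarrow> Limsup F (\<lambda>x. ereal (g k x)) \<le> S"
    unfolding S_def using K by auto
  have "eventually (\<lambda>x. \<forall>k\<in>K. g k x \<le> c) F"
  proof (rule eventually_ball_finite[OF K], intro ballI)
    fix k assume "k \<in> K"
    then have "Limsup F (\<lambda>x. ereal (g k x)) < ereal c" using S_ge Sc by (meson order_le_less_trans)
    from Limsup_lessD[OF this] show "eventually (\<lambda>x. g k x \<le> c) F"
      by (auto elim: eventually_mono)
  qed
  moreover have "0 \<le> c" using order_trans[OF S_ge(1) less_imp_le[OF Sc]] by simp
  ultimately show ?thesis using cL by auto
qed

lemma bound_at_puncture: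
  fixes h :: "real \<Rightarrow> real"
  assumes cont: "isCont h 0" and \<delta>: "\<delta> > 0"
    and bnd: "\<And>x. \<bar>x\<bar> \<le> \<delta> \<Longrightarrow> x \<noteq> 0 \<Longrightarrow> h x \<le> b"
  shows "h 0 \<le> b"
proof -
  have "eventually (\<lambda>x. h x \<le> b) (at 0)"
    unfolding eventually_at using \<delta> bnd by (intro exI[of _ \<delta>]) (auto simp: dist_real_def)
  with cont show ?thesis
    by (intro tendsto_upperbound[of h "h 0" "at 0"]) (auto simp: isCont_def)
qed

lemma equation_bound:
  fixes D :: "nat \<Rightarrow> real \<Rightarrow> 'a::real_normed_field" and a :: "nat \<Rightarrow> 'a"
  assumes eq: "D n x = - (\<Sum>k<n. a k * D k x)"
    and coeff: "\<And>k. k < n \<Longrightarrow> \<bar>x\<bar> ^ (n - k) * norm (a k) \<le> c"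
    and lower: "\<And>k. k < n \<Longrightarrow> norm (D k x) \<le> M * \<bar>x\<bar> ^ (n - k) / fact (n - k)"
    and M: "M \<ge> 0"
  shows "norm (D n x) \<le> c * (\<Sum>k<n. 1 / fact (n - k)) * M"
proof -
  have "norm (D n x) \<le> (\<Sum>k<n. norm (a k) * norm (D k x))"
    using eq norm_sum[of "\<lambda>k. a k * D k x" "{..<n}"] by (simp add: norm_mult)
  also have "\<dots> \<le> (\<Sum>k<n. c * (M / fact (n - k)))"
  proof (rule sum_mono)
    fix k assume "k \<in> {..<n}"
    then have k: "k < n" by simp
    have "norm (a k) * norm (D k x) \<le> norm (a k) * (M * \<bar>x\<bar> ^ (n - k) / fact (n - k))"
      using lower[OF k] by (rule mult_left_mono) simp
    also have "\<dots> = (\<bar>x\<bar> ^ (n - k) * norm (a k)) * (M / fact (n - k))"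
      by (simp add: field_simps)
    also have "\<dots> \<le> c * (M / fact (n - k))"
      using coeff[OF k] M by (intro mult_right_mono) auto
    finally show "norm (a k) * norm (D k x) \<le> c * (M / fact (n - k))" .
  qed
  also have "\<dots> = c * (\<Sum>k<n. 1 / fact (n - k)) * M"
    by (simp add: sum_distrib_left sum_distrib_right)
  finally show ?thesis .
qed

text \<open>The core contraction argument on a chain \<open>D 0, \<dots>, D n\<close> of derivatives on
  \<open>[-\<delta>,\<delta>]\<close> vanishing at 0 below order \<open>n\<close> and satisfying the equation off 0 with
  \<open>\<bar>x\<bar>\<^sup>n\<^sup>-\<^sup>k \<bar>a\<^sub>k x\<bar> \<le> c\<close>, \<open>c B\<^sub>n < 1\<close>: the maximum \<open>M\<close> of \<open>\<bar>D n\<bar>\<close> satisfies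
  \<open>M \<le> q M\<close> with \<open>q < 1\<close>, hence \<open>M = 0\<close> and \<open>D 0\<close> vanishes.\<close>
lemma flat_chain_vanishes:
  fixes D :: "nat \<Rightarrow> real \<Rightarrow> 'a::real_normed_field" and a :: "nat \<Rightarrow> real \<Rightarrow> 'a"
  assumes \<delta>: "\<delta> > 0"
    and deriv: "\<And>k t. k \<le> n \<Longrightarrow> \<bar>t\<bar> \<le> \<delta> \<Longrightarrow> (D k has_vector_derivative D (Suc k) t) (at t)"
    and init: "\<And>k. k < n \<Longrightarrow> D k 0 = 0"
    and eq: "\<And>x. \<bar>x\<bar> \<le> \<delta> \<Longrightarrow> x \<noteq> 0 \<Longrightarrow> D n x = - (\<Sum>k<n. a k x * D k x)"
    and coeff: "\<And>k x. k < n \<Longrightarrow> \<bar>x\<bar> \<le> \<delta> \<Longrightarrow> x \<noteq> 0 \<Longrightarrow> \<bar>x\<bar> ^ (n - k) * norm (a k x) \<le> c"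
    and c: "0 \<le> c" "c * (\<Sum>j<n. 1 / fact j) < 1"
    and x: "\<bar>x\<bar> \<le> \<delta>"
  shows "D 0 x = 0"
proof -
  have cont_top: "isCont (\<lambda>x. norm (D n x)) t" if "\<bar>t\<bar> \<le> \<delta>" for t
    using has_vector_derivative_continuous[OF deriv[OF order_refl that]]
    by (intro continuous_intros)
  then have "continuous_on {-\<delta>..\<delta>} (\<lambda>x. norm (D n x))"
    by (intro continuous_at_imp_continuous_on) (auto simp: abs_le_iff)
  then obtain x0 where "x0 \<in> {-\<delta>..\<delta>}"
      and x0_max: "\<And>t. t \<in> {-\<delta>..\<delta>} \<Longrightarrow> norm (D n t) \<le> norm (D n x0)"
    using continuous_attains_sup[of "{-\<delta>..\<delta>}" "\<lambda>x. norm (D n x)"] \<delta> by auto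
  define M where "M = norm (D n x0)"
  have M0: "M \<ge> 0" by (simp add: M_def)
  have top: "norm (D n t) \<le> M" if "\<bar>t\<bar> \<le> \<delta>" for t
    using x0_max that by (simp add: M_def abs_le_iff)
  have lower: "norm (D (n - j) x) \<le> M * \<bar>x\<bar> ^ j / fact j" if "j \<le> n" "\<bar>x\<bar> \<le> \<delta>" for j x
    using iterated_derivative_bound[of n \<delta> D M j x] deriv init top that by simp
  define q where "q = c * (\<Sum>k<n. 1 / fact (n - k))"
  have "q \<le> c * (\<Sum>j<n. 1 / fact j)"
    unfolding q_def by (rule mult_left_mono[OF sum_inverse_fact_shift_le c(1)])
  with c(2) have q1: "q < 1" by simp
  have off_zero: "norm (D n x) \<le> q * M" if x: "\<bar>x\<bar> \<le> \<delta>" "x \<noteq> 0" for x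
    unfolding q_def
  proof (rule equation_bound[where a = "\<lambda>k. a k x"])
    show "D n x = - (\<Sum>k<n. a k x * D k x)" using eq x by simp
    show "\<bar>x\<bar> ^ (n - k) * norm (a k x) \<le> c" if "k < n" for k using coeff that x by simp
    show "norm (D k x) \<le> M * \<bar>x\<bar> ^ (n - k) / fact (n - k)" if "k < n" for k
      using lower[of "n - k" x] x(1) that by simp
  qed (rule M0)
  have "norm (D n t) \<le> q * M" if "\<bar>t\<bar> \<le> \<delta>" for t
  proof (cases "t = 0")
    case True
    then show ?thesis using bound_at_puncture[OF cont_top \<delta> off_zero] \<delta> by simp
  qed (use off_zero that in simp)
  then have "M \<le> q * M" using \<open>x0 \<in> {-\<delta>..\<delta>}\<close> by (simp add: M_def abs_le_iff)
  then have "M = 0" using q1 M0 by (simp add: mult_le_cancel_right1)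
  then show ?thesis using lower[of n x] x by simp
qed

lemma flat_solution_vanishes:
  fixes f :: "real \<Rightarrow> 'a::real_normed_field" and A :: "nat \<Rightarrow> real \<Rightarrow> 'a \<Rightarrow> 'a"
  assumes n: "n \<ge> 1" and a: "a > 0"
    and sm: "smooth_on {-a<..<a} f"
    and eq: "\<forall>x\<in>{-a<..<a} - {0}. nth_vderiv n f x + (\<Sum>k<n. A k x (f x) * nth_vderiv k f x) = 0"
    and init: "\<forall>k<n. nth_vderiv k f 0 = 0"
    and ls: "\<forall>k<n. Limsup (at 0) (\<lambda>x. ereal (\<bar>x\<bar> ^ (n - k) * norm (A k x (f x))))
               < ereal (1 / (\<Sum>j<n. 1 / fact j))"
  shows "\<exists>\<delta>>0. \<delta> < a \<and> (\<forall>x\<in>{-\<delta>..\<delta>}. f x = 0)"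
proof -
  define B :: real where "B = (\<Sum>j<n. 1 / fact j)"
  have "1 / fact 0 \<le> B" unfolding B_def by (rule member_le_sum) (use n in auto)
  then have B1: "B \<ge> 1" by simp
  obtain c where c: "0 \<le> c" "c < 1 / B"
      and "eventually (\<lambda>x. \<forall>k\<in>{..<n}. \<bar>x\<bar> ^ (n - k) * norm (A k x (f x)) \<le> c) (at 0)"
    using Limsup_uniform_bound[where K = "{..<n}" and L = "1 / B" and F = "at 0"
        and g = "\<lambda>k x. \<bar>x\<bar> ^ (n - k) * norm (A k x (f x))"] ls B1
    unfolding B_def by auto
  then obtain d where d: "d > 0" and coeff:
      "\<And>x k. x \<noteq> 0 \<Longrightarrow> \<bar>x\<bar> < d \<Longrightarrow> k < n \<Longrightarrow> \<bar>x\<bar> ^ (n - k) * norm (A k x (f x)) \<le> c"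
    unfolding eventually_at by (auto simp: dist_real_def)
  define \<delta> where "\<delta> = min (d / 2) (a / 2)"
  have \<delta>: "\<delta> > 0" "\<delta> < a" "\<delta> < d" using d a by (auto simp: \<delta>_def)
  have inner: "\<bar>t\<bar> \<le> \<delta> \<Longrightarrow> t \<in> {-a<..<a}" for t using \<delta> by auto
  have deriv: "(nth_vderiv k f has_vector_derivative nth_vderiv (Suc k) f t) (at t)"
    if "\<bar>t\<bar> \<le> \<delta>" for k t
  proof -
    have "nth_vderiv k f differentiable (at t)" using sm inner[OF that] by (simp add: smooth_on_def)
    then show ?thesis by (simp add: vector_derivative_works)
  qed
  have "c * B < 1" using c B1 by (simp add: field_simps)
  have "f x = 0" if "x \<in> {-\<delta>..\<delta>}" for x
  proof -
    have "nth_vderiv 0 f x = 0"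
    proof (rule flat_chain_vanishes[where a = "\<lambda>k x. A k x (f x)" and c = c])
      show "nth_vderiv n f t = - (\<Sum>k<n. A k t (f t) * nth_vderiv k f t)"
        if "\<bar>t\<bar> \<le> \<delta>" "t \<noteq> 0" for t
        using eq inner[OF that(1)] that(2) by (auto simp: eq_neg_iff_add_eq_0)
      show "\<bar>t\<bar> ^ (n - k) * norm (A k t (f t)) \<le> c" if "k < n" "\<bar>t\<bar> \<le> \<delta>" "t \<noteq> 0" for k t
        using coeff[OF that(3) _ that(1)] that(2) \<delta> by simp
    qed (use \<delta> deriv init c \<open>c * B < 1\<close> that in \<open>auto simp: B_def abs_le_iff\<close>)
    then show ?thesis by simp
  qed
  then show ?thesis using \<delta> by blast
qed

theorem mainTheorem2:
  fixes n :: nat and a :: real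
  assumes "n \<ge> 1" and "a > 0"
  shows
   "(\<forall>(f :: real \<Rightarrow> real) (A :: nat \<Rightarrow> real \<Rightarrow> real \<Rightarrow> real).
       smooth_on {-a<..<a} f
     \<and> (\<forall>x\<in>{-a<..<a} - {0}.
           nth_vderiv n f x + (\<Sum>k<n. A k x (f x) * nth_vderiv k f x) = 0)
     \<and> (\<forall>k<n. nth_vderiv k f 0 = 0)
     \<and> (\<forall>k<n. Limsup (at 0) (\<lambda>x. ereal (\<bar>x\<bar> ^ (n - k) * norm (A k x (f x))))
               < ereal (1 / (\<Sum>j<n. 1 / fact j)))
     \<longrightarrow> (\<exists>\<delta>>0. \<delta> < a \<and> (\<forall>x\<in>{-\<delta>..\<delta>}. f x = 0)))
  \<and> (\<forall>(f :: real \<Rightarrow> complex) (A :: nat \<Rightarrow> real \<Rightarrow> complex \<Rightarrow> complex).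
       smooth_on {-a<..<a} f
     \<and> (\<forall>x\<in>{-a<..<a} - {0}.
           nth_vderiv n f x + (\<Sum>k<n. A k x (f x) * nth_vderiv k f x) = 0)
     \<and> (\<forall>k<n. nth_vderiv k f 0 = 0)
     \<and> (\<forall>k<n. Limsup (at 0) (\<lambda>x. ereal (\<bar>x\<bar> ^ (n - k) * norm (A k x (f x))))
               < ereal (1 / (\<Sum>j<n. 1 / fact j)))
     \<longrightarrow> (\<exists>\<delta>>0. \<delta> < a \<and> (\<forall>x\<in>{-\<delta>..\<delta>}. f x = 0)))"
  by (intro conjI allI impI; elim conjE; rule flat_solution_vanishes[OF assms])

end
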